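(* Consider the relative dynamics and constraint described in the context, with initial location $\mathbf{x}_0=(x_0,y_0)$, $\|\mathbf{x}_0\|>1$, $y_0\ge0$, and let $$\theta_{\tan}=\cos^{-1}\Big(\tfrac{1}{\|\mathbf{x}_0\|}\Big)+\operatorname{atan}(y_0,x_0).$$ For a target location on the Proximity Circle at angle $\theta\ge\theta_{\tan}$, the optimal (minimum-time, constraint-respecting) Evader trajectory from $\mathbf{x}_0$ to $(\cos\theta,\sin\theta)$ is to follow a straight-line trajectory to the point $(\cos\theta_{\tan},\sin\theta_{\tan})$ (the tangent point of the Proximity Circle as seen from $\mathbf{x}_0$) and then proceed along the Proximity Circle from $\theta_{\tan}$ to $\theta$.
   Context: Pursuer-fixed frame: the Evader's relative position $\mathbf{x}(t)=(x(t),y(t))\in\mathbb{R}^2$ evolves as $\dot x=\mu\cos\psi(t)-1$, $\dot y=\mu\sin\psi(t)$, $\mathbf{x}(0)=\mathbf{x}_0$, where $\mu\in(0,1)$ and $\psi(t)$ is the Evader's heading. The Proximity Circle is $\|\mathbf{x}\|=1$ and trajectories must satisfy $\|\mathbf{x}(t)\|\ge1$. A location at angle $\theta$ on the Proximity Circle means the point $(\cos\theta,\sin\theta)$. $\operatorname{atan}(a,b)$ is the two-argument arctangent (polar angle of $(b,a)$). The paper assumes throughout that $y\ge 0$. *)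

theory Defs
  imports "HOL-Analysis.Analysis"
begin

text \<open>Two-argument arctangent: atan2 a b is the polar angle of the point (b,a),
  with values in (-pi, pi] (library Arg).\<close>
definition atan2 :: "real \<Rightarrow> real \<Rightarrow> real" where
  "atan2 a b = Arg (Complex b a)"

text \<open>Relative velocity in the Pursuer-fixed frame for Evader heading psi.\<close>
definition rel_vel :: "real \<Rightarrow> real \<Rightarrow> real \<times> real" where
  "rel_vel \<mu> \<psi> = (\<mu> * cos \<psi> - 1, \<mu> * sin \<psi>)"

definition admissible ::
  "real \<Rightarrow> real \<times> real \<Rightarrow> (real \<Rightarrow> real) \<Rightarrow> real \<Rightarrow> (real \<Rightarrow> real \<times> real) \<Rightarrow> bool" where
  "admissible \<mu> p0 \<psi> T x \<longleftrightarrow>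
     0 \<le> T \<and> \<psi> \<in> borel_measurable lborel \<and>
     (\<forall>t\<in>{0..T}. x t = p0 + integral {0..t} (\<lambda>s. rel_vel \<mu> (\<psi> s)) \<and> 1 \<le> norm (x t))"

end

theory Submission
  imports Defs
begin

text \<open>
  Let \<open>\<theta>t\<close> be the angle of the tangent point seen from \<open>(x0, y0)\<close> and \<open>\<rho>\<close> the length of the
  tangent segment. At angle \<open>\<phi>\<close> the Evader can move in the direction \<open>(-sin \<phi>, cos \<phi>)\<close> with
  speed at most \<open>arc_speed \<mu> \<phi> = sin \<phi> + sqrt (\<mu>\<^sup>2 - cos\<^sup>2 \<phi>)\<close>. Running down the tangent
  segment at speed \<open>arc_speed \<mu> \<theta>t\<close> and then along the arc at these speeds is admissible and
  takes time \<open>\<rho> / arc_speed \<mu> \<theta>t + \<integral>\<^sub>\<theta>\<^sub>t\<^sup>\<theta> d\<phi> / arc_speed \<mu> \<phi>\<close>; that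
  these speeds are real along the way (\<open>-\<mu> \<le> cos \<theta>\<close>, \<open>cos \<theta>t \<le> \<mu>\<close>) follows from the existence of
  some admissible arrival.

  Optimality is a verification argument. The linearisation of the arc time at the tangent point,
  and, once the trajectory has crossed the vertical through the tangent point, a smooth extension
  of the arc time off the circle, grow at rate at most one along every admissible motion (a
  Hamilton-Jacobi inequality); their total increase from \<open>(x0, y0)\<close> to the target is exactly
  the time above. Smoothness requires replacing \<open>\<mu>\<close> by some \<open>m > \<mu>\<close> first and letting
  \<open>m\<close> tend to \<open>\<mu>\<close> at the end.
\<close>

lemma abs_lincomb_le_mult:
  fixes c s e1 e2 K R :: real
  assumes "e1\<^sup>2 + e2\<^sup>2 \<le> R\<^sup>2" "c\<^sup>2 + s\<^sup>2 = K\<^sup>2" "0 \<le> R" "0 \<le> K"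
  shows "\<bar>c * e1 + s * e2\<bar> \<le> K * R"
proof -
  have "(c\<^sup>2 + s\<^sup>2) * (e1\<^sup>2 + e2\<^sup>2) - (c * e1 + s * e2)\<^sup>2 = (c * e2 - s * e1)\<^sup>2"
    by (simp add: power2_eq_square algebra_simps)
  then have "(c * e1 + s * e2)\<^sup>2 \<le> (c\<^sup>2 + s\<^sup>2) * (e1\<^sup>2 + e2\<^sup>2)"
    using zero_le_power2[of "c * e2 - s * e1"] by linarith
  also have "\<dots> \<le> (K * R)\<^sup>2"
    using assms(1,2) by (simp add: mult_left_mono power_mult_distrib)
  finally show ?thesis
    using assms(3,4) abs_le_square_iff[of "c * e1 + s * e2" "K * R"] by simp
qed

lemma increment_le_of_local_increment_le:
  fixes g :: "real \<Rightarrow> real"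
  assumes ab: "a \<le> b" and cont: "continuous_on {a..b} g"
    and local_bound: "\<And>t. t \<in> {a..<b} \<Longrightarrow>
           \<exists>d>0. \<forall>s. t < s \<and> s < t + d \<and> s \<le> b \<longrightarrow> g s - g t \<le> L * (s - t)"
  shows "g b - g a \<le> L * (b - a)"
proof -
  \<comment> \<open>continuous induction: the largest \<open>s\<close> up to which the bound holds must be \<open>b\<close>\<close>
  define S where "S = {s \<in> {a..b}. g s - g a \<le> L * (s - a)}"
  have "a \<in> S" using ab unfolding S_def by auto
  moreover have bdd: "bdd_above S" unfolding S_def by (auto intro: bdd_aboveI[of _ b])
  moreover have "closed S" unfolding S_def
    by (rule continuous_on_closed_Collect_le) (auto intro!: continuous_intros cont)
  ultimately have cS: "Sup S \<in> S" using closed_contains_Sup by blast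
  have "Sup S = b"
  proof (rule ccontr)
    assume "Sup S \<noteq> b"
    with cS have c: "Sup S \<in> {a..<b}" unfolding S_def by auto
    from local_bound[OF c] obtain d where d: "d > 0"
      "\<And>s. Sup S < s \<and> s < Sup S + d \<and> s \<le> b \<Longrightarrow> g s - g (Sup S) \<le> L * (s - Sup S)"
      by blast
    define s where "s = min (Sup S + d / 2) b"
    have s: "Sup S < s" "s < Sup S + d" "s \<le> b" using c d(1) unfolding s_def by auto
    have "g s - g a = (g s - g (Sup S)) + (g (Sup S) - g a)" by simp
    also have "\<dots> \<le> L * (s - Sup S) + L * (Sup S - a)"
      using d(2) s cS unfolding S_def by (intro add_mono) auto
    also have "\<dots> = L * (s - a)" by (simp add: algebra_simps)
    finally have "s \<in> S" unfolding S_def using s c by auto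
    then show False using cSup_upper[OF _ bdd] s(1) by fastforce
  qed
  then show ?thesis using cS unfolding S_def by auto
qed

lemma increment_le_of_right_growth:
  fixes g :: "real \<Rightarrow> real"
  assumes ab: "a \<le> b" and cont: "continuous_on {a..b} g"
    and local_growth: "\<And>t e. t \<in> {a..<b} \<Longrightarrow> e > 0 \<Longrightarrow>
           \<exists>d>0. \<forall>s. t < s \<and> s < t + d \<and> s \<le> b \<longrightarrow> g s - g t \<le> (K + e) * (s - t)"
  shows "g b - g a \<le> K * (b - a)"
proof (rule field_le_epsilon)
  fix e :: real assume e: "0 < e"
  define e' where "e' = e / (b - a + 1)"
  have e': "e' > 0" "e' * (b - a) \<le> e"
    using e ab unfolding e'_def by (auto simp: field_simps)
  have "g b - g a \<le> (K + e') * (b - a)"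
    using increment_le_of_local_increment_le[OF ab cont] local_growth[OF _ e'(1)] by blast
  then show "g b - g a \<le> K * (b - a) + e" using e'(2) by (simp add: algebra_simps)
qed

lemma right_growth_of_derivative:
  fixes W :: "'a::real_normed_vector \<Rightarrow> real" and x :: "real \<Rightarrow> 'a"
  assumes W: "(W has_derivative D) (at (x t))"
    and D: "\<And>s. t < s \<Longrightarrow> s \<le> b \<Longrightarrow> D (x s - x t) \<le> K * (s - t)"
    and lip: "\<And>s. t < s \<Longrightarrow> s \<le> b \<Longrightarrow> norm (x s - x t) \<le> C * (s - t)"
    and C: "0 \<le> C" and e: "0 < e"
  shows "\<exists>d>0. \<forall>s. t < s \<and> s < t + d \<and> s \<le> b \<longrightarrow> W (x s) - W (x t) \<le> (K + e) * (s - t)"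
proof -
  define e' where "e' = e / (C + 1)"
  have e': "0 < e'" "e' * C \<le> e" using C e by (auto simp: e'_def field_simps)
  obtain \<delta> where \<delta>: "\<delta> > 0" "\<And>z. norm (z - x t) < \<delta> \<Longrightarrow>
      norm (W z - W (x t) - D (z - x t)) \<le> e' * norm (z - x t)"
    using W e'(1) unfolding has_derivative_at_alt by blast
  show ?thesis
  proof (intro exI[of _ "\<delta> / (C + 1)"] conjI allI impI)
    show "0 < \<delta> / (C + 1)" using \<delta>(1) C by simp
    fix s assume s: "t < s \<and> s < t + \<delta> / (C + 1) \<and> s \<le> b"
    have near: "norm (x s - x t) \<le> C * (s - t)" using lip s by blast
    also have "C * (s - t) \<le> (C + 1) * (s - t)" using s by simp
    also have "\<dots> < \<delta>" using s C by (simp add: field_simps)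
    finally have "W (x s) - W (x t) - D (x s - x t) \<le> e' * norm (x s - x t)"
      using \<delta>(2) abs_le_D1 unfolding real_norm_def by blast
    also have "\<dots> \<le> e' * (C * (s - t))" using near e'(1) by (intro mult_left_mono) auto
    also have "\<dots> \<le> e * (s - t)" using e'(2) s by (simp add: mult.assoc[symmetric] mult_right_mono)
    finally show "W (x s) - W (x t) \<le> (K + e) * (s - t)"
      using D[of s] s by (simp add: algebra_simps)
  qed
qed

lemma cos_sin_pi_minus_double_arctan:
  fixes a b :: real
  assumes ab: "a\<^sup>2 + b\<^sup>2 = 1" and a1: "a < 1"
  shows "cos (pi - 2 * arctan (b / (1 - a))) = a" "sin (pi - 2 * arctan (b / (1 - a))) = b"
proof -
  define u where "u = b / (1 - a)"
  define z where "z = arctan u"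
  have na: "1 - a \<noteq> 0" "1 - a > 0" using a1 by auto
  have u2: "u\<^sup>2 = (1 + a) / (1 - a)"
  proof -
    have "u\<^sup>2 = b\<^sup>2 / (1 - a)\<^sup>2" unfolding u_def by (simp add: power_divide)
    also have "b\<^sup>2 = (1 - a) * (1 + a)" using ab by (simp add: power2_eq_square algebra_simps)
    finally show ?thesis using na by (simp add: power2_eq_square)
  qed
  have w: "1 + u\<^sup>2 = 2 / (1 - a)" using na unfolding u2 by (simp add: field_simps)
  have wpos: "1 + u\<^sup>2 > 0" by (simp add: add_pos_nonneg)
  have c2: "(cos z)\<^sup>2 = 1 / (1 + u\<^sup>2)" unfolding z_def cos_arctan using wpos
    by (simp add: power_divide)
  have s2: "(sin z)\<^sup>2 = u\<^sup>2 / (1 + u\<^sup>2)" unfolding z_def sin_arctan using wpos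
    by (simp add: power_divide)
  have sc: "sin z * cos z = u / (1 + u\<^sup>2)" unfolding z_def sin_arctan cos_arctan using wpos
    by (simp add: power2_eq_square[symmetric])
  have "cos (pi - 2 * z) = (u\<^sup>2 - 1) / (1 + u\<^sup>2)"
    unfolding cos_diff cos_double c2 s2 by (simp add: diff_divide_distrib)
  also have "\<dots> = a" unfolding w u2 using na by (simp add: field_simps)
  finally show "cos (pi - 2 * arctan (b / (1 - a))) = a" unfolding z_def u_def .
  have "sin (pi - 2 * z) = 2 * u / (1 + u\<^sup>2)" by (simp add: sin_double mult.assoc sc)
  also have "\<dots> = b" unfolding w unfolding u_def using na by (simp add: field_simps)
  finally show "sin (pi - 2 * arctan (b / (1 - a))) = b" unfolding z_def u_def .
qed

lemma has_real_derivative_sqrt_diff_square: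
  fixes r X :: real
  assumes "X\<^sup>2 < r"
  shows "((\<lambda>y. sqrt (r - y\<^sup>2)) has_real_derivative - X / sqrt (r - X\<^sup>2)) (at X)"
proof -
  have "((\<lambda>y. sqrt (r - y\<^sup>2)) has_real_derivative inverse (sqrt (r - X\<^sup>2)) / 2 * (- (2 * X))) (at X)"
    by (rule DERIV_chain2[OF DERIV_real_sqrt]) (use assms in \<open>auto intro!: derivative_eq_intros\<close>)
  then show ?thesis by (simp add: field_simps)
qed


section \<open>Speed along the circle\<close>

text \<open>The speed along the circle at angle \<open>\<phi>\<close>, in the direction \<open>(-sin \<phi>, cos \<phi>)\<close>, that a
  relative velocity \<open>(-1, 0) + m (cos \<psi>, sin \<psi>)\<close> can produce: the larger root \<open>s\<close> of
  \<open>s\<^sup>2 - 2 s sin \<phi> + 1 = m\<^sup>2\<close>.\<close>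
definition arc_speed :: "real \<Rightarrow> real \<Rightarrow> real" where
  "arc_speed m \<phi> = sin \<phi> + sqrt (m\<^sup>2 - (cos \<phi>)\<^sup>2)"

text \<open>Time per unit angle; the truncation at \<open>c > 0\<close> keeps it continuous on all of \<open>\<real>\<close>.\<close>
definition arc_pace :: "real \<Rightarrow> real \<Rightarrow> real \<Rightarrow> real" where
  "arc_pace c m \<phi> = 1 / max (arc_speed m \<phi>) c"

text \<open>Anchored at \<open>a - 1\<close> so that the derivative at \<open>\<phi> = a\<close> is two-sided.\<close>
definition arc_time :: "real \<Rightarrow> real \<Rightarrow> real \<Rightarrow> real \<Rightarrow> real" where
  "arc_time c m a \<phi> = integral {a - 1..\<phi>} (arc_pace c m) - integral {a - 1..a} (arc_pace c m)"

lemma continuous_on_arc_pace: "c > 0 \<Longrightarrow> continuous_on UNIV (arc_pace c m)"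
  unfolding arc_pace_def[abs_def] arc_speed_def
  by (intro continuous_intros) (auto simp: max_def)

lemma arc_pace_pos: "c > 0 \<Longrightarrow> arc_pace c m \<phi> > 0"
  by (simp add: arc_pace_def)

lemma arc_pace_eq: "0 < c \<Longrightarrow> c \<le> arc_speed m \<phi> \<Longrightarrow> arc_pace c m \<phi> = 1 / arc_speed m \<phi>"
  by (simp add: arc_pace_def max_def)

lemma arc_pace_integrable: "c > 0 \<Longrightarrow> arc_pace c m integrable_on {a..b}"
  by (rule integrable_continuous_interval) (rule continuous_on_subset[OF continuous_on_arc_pace], auto)

lemma arc_time_has_derivative:
  assumes c: "c > 0" and \<phi>: "a - 1 < \<phi>"
  shows "(arc_time c m a has_real_derivative arc_pace c m \<phi>) (at \<phi>)"
proof -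
  have "((\<lambda>u. integral {a - 1..u} (arc_pace c m)) has_real_derivative arc_pace c m \<phi>)
          (at \<phi> within {a - 1..\<phi> + 1})"
    by (rule integral_has_real_derivative)
       (use \<phi> continuous_on_subset[OF continuous_on_arc_pace[OF c]] in auto)
  moreover have "at \<phi> within {a - 1..\<phi> + 1} = at \<phi>"
    by (rule at_within_interior) (use \<phi> in auto)
  ultimately show ?thesis
    unfolding arc_time_def[abs_def] by (auto intro!: derivative_eq_intros)
qed

lemma arc_time_eq_integral:
  assumes "c > 0" "a \<le> b" shows "arc_time c m a b = integral {a..b} (arc_pace c m)"
proof -
  have "integral {a - 1..a} (arc_pace c m) + integral {a..b} (arc_pace c m)
          = integral {a - 1..b} (arc_pace c m)"
    by (rule Henstock_Kurzweil_Integration.integral_combine)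
       (use assms arc_pace_integrable in auto)
  then show ?thesis by (simp add: arc_time_def)
qed

lemma arc_time_self [simp]: "arc_time c m a a = 0"
  by (simp add: arc_time_def)

lemma arc_time_strict_mono:
  assumes c: "c > 0" and "a - 1 < \<phi>1" "\<phi>1 < \<phi>2"
  shows "arc_time c m a \<phi>1 < arc_time c m a \<phi>2"
proof (rule DERIV_pos_imp_increasing[OF assms(3)])
  fix y assume "\<phi>1 \<le> y" "y \<le> \<phi>2"
  then have "a - 1 < y" using assms(2) by linarith
  then show "\<exists>z. DERIV (arc_time c m a) y :> z \<and> z > 0"
    using arc_time_has_derivative[OF c] arc_pace_pos[OF c] by blast
qed

lemma continuous_on_arc_time: "c > 0 \<Longrightarrow> continuous_on {a..b} (arc_time c m a)"
  by (rule continuous_at_imp_continuous_on)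
     (auto intro: DERIV_isCont[OF arc_time_has_derivative])

lemma arc_speed_bounds:
  assumes "(cos \<phi>)\<^sup>2 \<le> \<mu>\<^sup>2" "0 \<le> sin \<phi>" "0 \<le> \<mu>" "\<mu> \<le> m"
  shows "sqrt (1 - \<mu>\<^sup>2) \<le> sin \<phi>" "sin \<phi> \<le> arc_speed m \<phi>"
proof -
  have "sqrt (1 - \<mu>\<^sup>2) \<le> sqrt ((sin \<phi>)\<^sup>2)"
    using assms(1) by (simp add: sin_squared_eq)
  then show "sqrt (1 - \<mu>\<^sup>2) \<le> sin \<phi>" using assms(2) by simp
  have "\<mu>\<^sup>2 \<le> m\<^sup>2" using assms(3,4) by (simp add: power_mono)
  then show "sin \<phi> \<le> arc_speed m \<phi>" using assms(1) by (simp add: arc_speed_def)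
qed

text \<open>The velocity \<open>arc_speed \<mu> \<phi> (-sin \<phi>, cos \<phi>)\<close> differs from the drift \<open>(-1, 0)\<close> by a
  vector of length \<open>\<mu>\<close>.\<close>
lemma arc_speed_velocity_norm:
  assumes "(cos \<phi>)\<^sup>2 \<le> \<mu>\<^sup>2"
  shows "(1 - arc_speed \<mu> \<phi> * sin \<phi>)\<^sup>2 + (arc_speed \<mu> \<phi> * cos \<phi>)\<^sup>2 = \<mu>\<^sup>2"
proof -
  define S where "S = sqrt (\<mu>\<^sup>2 - (cos \<phi>)\<^sup>2)"
  have S2: "S\<^sup>2 = \<mu>\<^sup>2 - (cos \<phi>)\<^sup>2" unfolding S_def using assms by simp
  have sc: "(sin \<phi>)\<^sup>2 + (cos \<phi>)\<^sup>2 = 1" by simp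
  have "(1 - (sin \<phi> + S) * sin \<phi>)\<^sup>2 + ((sin \<phi> + S) * cos \<phi>)\<^sup>2
      = 1 - 2 * (sin \<phi> + S) * sin \<phi> + (sin \<phi> + S)\<^sup>2 * ((sin \<phi>)\<^sup>2 + (cos \<phi>)\<^sup>2)"
    by algebra
  also have "\<dots> = 1 - (sin \<phi>)\<^sup>2 + S\<^sup>2" unfolding sc by algebra
  also have "\<dots> = \<mu>\<^sup>2" using S2 sc by linarith
  finally show ?thesis unfolding arc_speed_def S_def .
qed

lemma one_minus_arc_speed_sin_le:
  assumes "(cos \<phi>)\<^sup>2 \<le> \<mu>\<^sup>2" "0 \<le> sin \<phi>" "0 \<le> \<mu>"
  shows "1 - arc_speed \<mu> \<phi> * sin \<phi> \<le> \<mu>\<^sup>2"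
proof -
  have "(sin \<phi>)\<^sup>2 \<le> arc_speed \<mu> \<phi> * sin \<phi>"
    using arc_speed_bounds(2)[OF assms order_refl] assms(2)
    by (simp add: power2_eq_square mult_right_mono)
  then show ?thesis using assms(1) by (simp add: sin_squared_eq)
qed

section \<open>The tangent-then-arc path\<close>

text \<open>\<open>\<theta>t\<close> is the angle of the tangent point seen from \<open>(x0, y0)\<close> and \<open>\<rho>\<close> the length of
  the tangent segment.\<close>
locale tangent_geometry =
  fixes \<mu> x0 y0 \<theta>t \<rho> :: real
  assumes mu: "0 < \<mu>" "\<mu> < 1"
    and x0: "x0 = cos \<theta>t + \<rho> * sin \<theta>t" and y0: "y0 = sin \<theta>t - \<rho> * cos \<theta>t"
    and rho: "\<rho> > 0" and tangent_angle_pos: "0 < \<theta>t"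
begin

lemma norm_tangent_line_point: "norm (cos \<theta>t + w * sin \<theta>t, sin \<theta>t - w * cos \<theta>t) = sqrt (1 + w\<^sup>2)"
proof -
  have "(cos \<theta>t + w * sin \<theta>t)\<^sup>2 + (sin \<theta>t - w * cos \<theta>t)\<^sup>2 = ((cos \<theta>t)\<^sup>2 + (sin \<theta>t)\<^sup>2) * (1 + w\<^sup>2)"
    by algebra
  then show ?thesis by (simp add: norm_prod_def)
qed

lemma start_norm: "norm (x0, y0) = sqrt (1 + \<rho>\<^sup>2)"
  unfolding x0 y0 by (rule norm_tangent_line_point)

lemma tangent_segment_outside_disk:
  assumes "p \<in> closed_segment (x0, y0) (cos \<theta>t, sin \<theta>t)" shows "1 \<le> norm p"
proof -
  obtain u where "p = (1 - u) *\<^sub>R (x0, y0) + u *\<^sub>R (cos \<theta>t, sin \<theta>t)"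
    using assms unfolding closed_segment_def by blast
  then have "p = (cos \<theta>t + ((1 - u) * \<rho>) * sin \<theta>t, sin \<theta>t - ((1 - u) * \<rho>) * cos \<theta>t)"
    by (simp add: x0 y0 algebra_simps)
  then show ?thesis by (simp add: norm_tangent_line_point)
qed

lemma mu_sq_lt_1: "\<mu>\<^sup>2 < 1"
  using mu by (simp add: power_less_one_iff abs_square_less_1)

definition min_speed where "min_speed = sqrt (1 - \<mu>\<^sup>2)"

lemma min_speed_pos: "min_speed > 0"
  unfolding min_speed_def using mu_sq_lt_1 by simp

lemma min_speed_sq: "min_speed\<^sup>2 = 1 - \<mu>\<^sup>2"
  unfolding min_speed_def using mu_sq_lt_1 by simp

end

locale tangent_config = tangent_geometry +
  fixes \<theta> :: real
  assumes target_angle: "\<theta>t \<le> \<theta>" "\<theta> < pi" "-\<mu> \<le> cos \<theta>" "cos \<theta>t \<le> \<mu>"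
begin

lemma cos_sq_le_on_arc: assumes "\<phi> \<in> {\<theta>t..\<theta>}" shows "(cos \<phi>)\<^sup>2 \<le> \<mu>\<^sup>2"
proof -
  have "cos \<phi> \<le> cos \<theta>t" "cos \<theta> \<le> cos \<phi>"
    using assms tangent_angle_pos target_angle by (auto intro: cos_monotone_0_pi_le)
  then have "\<bar>cos \<phi>\<bar> \<le> \<bar>\<mu>\<bar>" using target_angle mu by auto
  then show ?thesis using abs_le_square_iff by blast
qed

lemma sin_nonneg_on_arc: "\<phi> \<in> {\<theta>t..\<theta>} \<Longrightarrow> 0 \<le> sin \<phi>"
  using tangent_angle_pos target_angle by (intro sin_ge_zero) auto

lemma arc_speed_ge:
  assumes "\<phi> \<in> {\<theta>t..\<theta>}" "\<mu> \<le> m"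
  shows "sin \<phi> \<le> arc_speed m \<phi>" "min_speed \<le> arc_speed m \<phi>" "0 < arc_speed m \<phi>"
proof -
  note b = arc_speed_bounds[OF cos_sq_le_on_arc[OF assms(1)] sin_nonneg_on_arc[OF assms(1)]
      less_imp_le[OF mu(1)] assms(2)]
  show "sin \<phi> \<le> arc_speed m \<phi>" by (rule b(2))
  show "min_speed \<le> arc_speed m \<phi>" using b unfolding min_speed_def by linarith
  then show "0 < arc_speed m \<phi>" using min_speed_pos by linarith
qed

lemma arc_pace_on_arc:
  "\<phi> \<in> {\<theta>t..\<theta>} \<Longrightarrow> \<mu> \<le> m \<Longrightarrow> arc_pace min_speed m \<phi> = 1 / arc_speed m \<phi>"
  using arc_speed_ge min_speed_pos by (simp add: arc_pace_eq)

lemma inv_arc_speed_integrable: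
  assumes "\<mu> \<le> m" shows "(\<lambda>\<phi>. 1 / arc_speed m \<phi>) integrable_on {\<theta>t..\<theta>}"
proof -
  have "continuous_on {\<theta>t..\<theta>} (\<lambda>\<phi>. 1 / (sin \<phi> + sqrt (m\<^sup>2 - (cos \<phi>)\<^sup>2)))"
    using arc_speed_ge(3)[OF _ assms] unfolding arc_speed_def
    by (intro continuous_intros) force
  then show ?thesis unfolding arc_speed_def by (rule integrable_continuous_interval)
qed

lemma arc_time_on_arc:
  "\<mu> \<le> m \<Longrightarrow> arc_time min_speed m \<theta>t \<theta> = integral {\<theta>t..\<theta>} (\<lambda>\<phi>. 1 / arc_speed m \<phi>)"
  using arc_time_eq_integral[OF min_speed_pos target_angle(1)]
    integral_cong[of "{\<theta>t..\<theta>}" "arc_pace min_speed m" "\<lambda>\<phi>. 1 / arc_speed m \<phi>"]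
    arc_pace_on_arc by simp

definition tangent_arc_time :: "real \<Rightarrow> real" where
  "tangent_arc_time m = \<rho> / arc_speed m \<theta>t + integral {\<theta>t..\<theta>} (\<lambda>\<phi>. 1 / arc_speed m \<phi>)"


lemma continuous_on_arc_time_arc: "continuous_on {\<theta>t..\<theta>} (arc_time min_speed \<mu> \<theta>t)"
  by (rule continuous_on_arc_time[OF min_speed_pos])

lemma arc_time_mono_on_arc:
  "\<theta>t \<le> \<phi>1 \<Longrightarrow> \<phi>1 \<le> \<phi>2 \<Longrightarrow> arc_time min_speed \<mu> \<theta>t \<phi>1 \<le> arc_time min_speed \<mu> \<theta>t \<phi>2"
  by (cases "\<phi>1 = \<phi>2") (auto intro!: less_imp_le[OF arc_time_strict_mono[OF min_speed_pos]])

lemma inj_on_arc_time: "inj_on (arc_time min_speed \<mu> \<theta>t) {\<theta>t..\<theta>}"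
  by (rule strict_mono_on_imp_inj_on)
     (auto intro!: strict_mono_onI arc_time_strict_mono min_speed_pos)

definition arc_duration where "arc_duration = arc_time min_speed \<mu> \<theta>t \<theta>"

lemma arc_duration_nonneg: "0 \<le> arc_duration"
  using arc_time_mono_on_arc[of \<theta>t \<theta>] target_angle(1) unfolding arc_duration_def by simp

lemma arc_time_image: "arc_time min_speed \<mu> \<theta>t ` {\<theta>t..\<theta>} = {0..arc_duration}"
proof
  show "arc_time min_speed \<mu> \<theta>t ` {\<theta>t..\<theta>} \<subseteq> {0..arc_duration}"
    unfolding arc_duration_def using arc_time_mono_on_arc by force
  show "{0..arc_duration} \<subseteq> arc_time min_speed \<mu> \<theta>t ` {\<theta>t..\<theta>}"
  proof
    fix t assume "t \<in> {0..arc_duration}"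
    then have "\<exists>\<phi>. \<theta>t \<le> \<phi> \<and> \<phi> \<le> \<theta> \<and> arc_time min_speed \<mu> \<theta>t \<phi> = t"
      using target_angle(1) continuous_on_arc_time_arc by (intro IVT') (auto simp: arc_duration_def)
    then show "t \<in> arc_time min_speed \<mu> \<theta>t ` {\<theta>t..\<theta>}" by auto
  qed
qed

definition arc_angle where "arc_angle = inv_into {\<theta>t..\<theta>} (arc_time min_speed \<mu> \<theta>t)"

lemma arc_angle_in_arc: "t \<in> {0..arc_duration} \<Longrightarrow> arc_angle t \<in> {\<theta>t..\<theta>}"
  unfolding arc_angle_def by (rule inv_into_into) (simp add: arc_time_image)

lemma arc_time_arc_angle: "t \<in> {0..arc_duration} \<Longrightarrow> arc_time min_speed \<mu> \<theta>t (arc_angle t) = t"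
  unfolding arc_angle_def by (rule f_inv_into_f) (simp add: arc_time_image)

lemma arc_angle_arc_time: "\<phi> \<in> {\<theta>t..\<theta>} \<Longrightarrow> arc_angle (arc_time min_speed \<mu> \<theta>t \<phi>) = \<phi>"
  unfolding arc_angle_def by (rule inv_into_f_f[OF inj_on_arc_time])

lemma arc_angle_0: "arc_angle 0 = \<theta>t"
  using arc_angle_arc_time[of \<theta>t] target_angle(1) by simp

lemma arc_angle_duration: "arc_angle arc_duration = \<theta>"
  using arc_angle_arc_time[of \<theta>] target_angle(1) unfolding arc_duration_def by simp

lemma continuous_on_arc_angle: "continuous_on {0..arc_duration} arc_angle"
  using continuous_on_inv[OF continuous_on_arc_time_arc compact_Icc, of arc_angle]
    arc_angle_arc_time arc_time_image by simp

lemma arc_angle_mono: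
  assumes "s \<in> {0..arc_duration}" "t \<in> {0..arc_duration}" "s \<le> t"
  shows "arc_angle s \<le> arc_angle t"
proof (rule ccontr)
  assume "\<not> arc_angle s \<le> arc_angle t"
  then have "arc_time min_speed \<mu> \<theta>t (arc_angle t) < arc_time min_speed \<mu> \<theta>t (arc_angle s)"
    using arc_angle_in_arc[OF assms(2)] by (intro arc_time_strict_mono min_speed_pos) auto
  then show False using assms by (simp add: arc_time_arc_angle)
qed

lemma arc_angle_has_derivative:
  assumes "0 < t" "t < arc_duration"
  shows "(arc_angle has_real_derivative arc_speed \<mu> (arc_angle t)) (at t)"
proof -
  have \<phi>: "arc_angle t \<in> {\<theta>t..\<theta>}" using assms by (intro arc_angle_in_arc) simp
  have "(arc_angle has_real_derivative inverse (arc_pace min_speed \<mu> (arc_angle t))) (at t)"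
  proof (rule DERIV_inverse_function[where a = 0 and b = arc_duration])
    show "DERIV (arc_time min_speed \<mu> \<theta>t) (arc_angle t) :> arc_pace min_speed \<mu> (arc_angle t)"
      using \<phi> by (intro arc_time_has_derivative min_speed_pos) auto
    show "arc_pace min_speed \<mu> (arc_angle t) \<noteq> 0"
      using arc_pace_pos[OF min_speed_pos] by (metis less_irrefl)
    show "arc_time min_speed \<mu> \<theta>t (arc_angle y) = y" if "0 < y" "y < arc_duration" for y
      using that by (simp add: arc_time_arc_angle)
    show "isCont arc_angle t"
      using continuous_on_interior[OF continuous_on_arc_angle] assms by simp
  qed (use assms in auto)
  then show ?thesis using arc_pace_on_arc[OF \<phi> order_refl] arc_speed_ge(3)[OF \<phi> order_refl] by simp
qed

text \<open>The heading producing the relative velocity \<open>arc_speed \<mu> \<phi> (-sin \<phi>, cos \<phi>)\<close>;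
  \<open>pi - 2 arctan (b / (1 - a))\<close> is the polar angle of the unit vector \<open>(a, b)\<close>.\<close>
definition arc_heading :: "real \<Rightarrow> real" where
  "arc_heading \<phi> =
     pi - 2 * arctan ((arc_speed \<mu> \<phi> * cos \<phi> / \<mu>) / (1 - (1 - arc_speed \<mu> \<phi> * sin \<phi>) / \<mu>))"

lemma arc_heading_denominator:
  assumes "\<phi> \<in> {\<theta>t..\<theta>}" shows "(1 - arc_speed \<mu> \<phi> * sin \<phi>) / \<mu> < 1"
proof -
  have "1 - arc_speed \<mu> \<phi> * sin \<phi> \<le> \<mu>\<^sup>2"
    using one_minus_arc_speed_sin_le cos_sq_le_on_arc sin_nonneg_on_arc assms mu by simp
  also have "\<mu>\<^sup>2 < \<mu>" using mult_strict_left_mono[of \<mu> 1 \<mu>] mu by (simp add: power2_eq_square)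
  finally show ?thesis using mu by (simp add: divide_less_eq)
qed

lemma rel_vel_arc_heading:
  assumes "\<phi> \<in> {\<theta>t..\<theta>}"
  shows "rel_vel \<mu> (arc_heading \<phi>) = (- (arc_speed \<mu> \<phi> * sin \<phi>), arc_speed \<mu> \<phi> * cos \<phi>)"
proof -
  define a where "a = (1 - arc_speed \<mu> \<phi> * sin \<phi>) / \<mu>"
  define b where "b = arc_speed \<mu> \<phi> * cos \<phi> / \<mu>"
  have "a\<^sup>2 + b\<^sup>2 = 1"
    unfolding a_def b_def using arc_speed_velocity_norm[OF cos_sq_le_on_arc[OF assms]] mu
    by (simp add: power_divide add_divide_distrib[symmetric])
  moreover have "a < 1" unfolding a_def by (rule arc_heading_denominator[OF assms])
  moreover have "arc_heading \<phi> = pi - 2 * arctan (b / (1 - a))"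
    unfolding arc_heading_def a_def b_def ..
  ultimately have "cos (arc_heading \<phi>) = a" "sin (arc_heading \<phi>) = b"
    by (simp_all only: cos_sin_pi_minus_double_arctan)
  then show ?thesis using mu unfolding rel_vel_def a_def b_def by simp
qed

lemma continuous_on_arc_heading: "continuous_on {\<theta>t..\<theta>} arc_heading"
  unfolding arc_heading_def[abs_def] arc_speed_def
  using arc_heading_denominator mu unfolding arc_speed_def
  by (intro continuous_intros) force+

definition line_duration where "line_duration = \<rho> / arc_speed \<mu> \<theta>t"

lemma tangent_speed_pos: "0 < arc_speed \<mu> \<theta>t"
  using arc_speed_ge(3)[of \<theta>t \<mu>] target_angle(1) by simp

lemma line_duration_pos: "0 < line_duration"
  unfolding line_duration_def using rho tangent_speed_pos by simp

text \<open>The arc parameter is frozen at \<open>0\<close> during the straight-line phase and at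
  \<open>arc_duration\<close> after arrival, which makes the heading continuous on all of \<open>\<real>\<close>.\<close>
definition arc_clock where "arc_clock t = max 0 (min arc_duration (t - line_duration))"

definition opt_heading where "opt_heading t = arc_heading (arc_angle (arc_clock t))"

definition opt_velocity where "opt_velocity t = rel_vel \<mu> (opt_heading t)"

definition opt_path where "opt_path t = (x0, y0) + integral {0..t} opt_velocity"

lemma arc_clock_range: "arc_clock t \<in> {0..arc_duration}"
  unfolding arc_clock_def using arc_duration_nonneg by auto

lemma opt_velocity_eq:
  "opt_velocity t = (- (arc_speed \<mu> (arc_angle (arc_clock t)) * sin (arc_angle (arc_clock t))),
                     arc_speed \<mu> (arc_angle (arc_clock t)) * cos (arc_angle (arc_clock t)))"
  unfolding opt_velocity_def opt_heading_def
  by (rule rel_vel_arc_heading[OF arc_angle_in_arc[OF arc_clock_range]])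

lemma continuous_opt_heading: "continuous_on UNIV opt_heading"
proof -
  have "continuous_on UNIV arc_clock" unfolding arc_clock_def[abs_def] by (intro continuous_intros)
  then have "continuous_on UNIV (\<lambda>t. arc_angle (arc_clock t))"
    by (rule continuous_on_compose2[OF continuous_on_arc_angle]) (use arc_clock_range in auto)
  then show ?thesis unfolding opt_heading_def[abs_def]
    by (rule continuous_on_compose2[OF continuous_on_arc_heading])
       (use arc_angle_in_arc arc_clock_range in auto)
qed

lemma opt_heading_measurable: "opt_heading \<in> borel_measurable lborel"
  using borel_measurable_continuous_onI[OF continuous_opt_heading] by simp

lemma opt_velocity_integrable: "opt_velocity integrable_on {a..b}"
  unfolding opt_velocity_def[abs_def] rel_vel_def
  using continuous_on_subset[OF continuous_opt_heading]
  by (intro integrable_continuous_interval continuous_intros) auto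

lemma opt_path_line:
  assumes "0 \<le> t" "t \<le> line_duration"
  shows "opt_path t = (1 - t / line_duration) *\<^sub>R (x0, y0) + (t / line_duration) *\<^sub>R (cos \<theta>t, sin \<theta>t)"
proof -
  have "integral {0..t} opt_velocity
      = integral {0..t} (\<lambda>s. (- (arc_speed \<mu> \<theta>t * sin \<theta>t), arc_speed \<mu> \<theta>t * cos \<theta>t))"
    by (rule integral_cong)
       (use assms arc_duration_nonneg in \<open>simp add: opt_velocity_eq arc_clock_def arc_angle_0\<close>)
  also have "\<dots> = (t / line_duration) *\<^sub>R (- (\<rho> * sin \<theta>t), \<rho> * cos \<theta>t)"
    using assms rho tangent_speed_pos unfolding line_duration_def by (simp add: field_simps)
  finally show ?thesis unfolding opt_path_def by (simp add: x0 y0 algebra_simps)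
qed

lemma opt_path_on_segment:
  assumes "0 \<le> t" "t \<le> line_duration"
  shows "opt_path t \<in> closed_segment (x0, y0) (cos \<theta>t, sin \<theta>t)"
  unfolding opt_path_line[OF assms] closed_segment_def
  using assms line_duration_pos by (intro CollectI exI[of _ "t / line_duration"]) simp

lemma opt_path_tangent_point: "opt_path line_duration = (cos \<theta>t, sin \<theta>t)"
  using opt_path_line[of line_duration] line_duration_pos by simp

lemma opt_path_arc:
  assumes "line_duration \<le> t" "t \<le> line_duration + arc_duration"
  shows "opt_path t = (cos (arc_angle (t - line_duration)), sin (arc_angle (t - line_duration)))"
proof -
  define p where "p s = (cos (arc_angle (s - line_duration)), sin (arc_angle (s - line_duration)))" for s
  have "continuous_on {line_duration..t} (\<lambda>s. arc_angle (s - line_duration))"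
    by (rule continuous_on_compose2[OF continuous_on_arc_angle])
       (use assms in \<open>auto intro!: continuous_intros\<close>)
  then have cont: "continuous_on {line_duration..t} p"
    unfolding p_def by (intro continuous_intros)
  have "(p has_vector_derivative opt_velocity s) (at s)" if s: "s \<in> {line_duration<..<t}" for s
  proof -
    have "((\<lambda>s. arc_angle (s - line_duration)) has_real_derivative
            arc_speed \<mu> (arc_angle (s - line_duration))) (at s)"
      using DERIV_chain2[OF arc_angle_has_derivative DERIV_diff[OF DERIV_ident DERIV_const]]
        s assms by simp
    then have "(p has_vector_derivative
        (- sin (arc_angle (s - line_duration)) * arc_speed \<mu> (arc_angle (s - line_duration)),
         cos (arc_angle (s - line_duration)) * arc_speed \<mu> (arc_angle (s - line_duration)))) (at s)"
      unfolding p_def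
      by (intro has_vector_derivative_Pair)
         (auto intro!: derivative_eq_intros simp: has_real_derivative_iff_has_vector_derivative[symmetric])
    moreover have "arc_clock s = s - line_duration" using s assms unfolding arc_clock_def by simp
    ultimately show ?thesis by (simp add: opt_velocity_eq mult.commute)
  qed
  then have "(opt_velocity has_integral p t - p line_duration) {line_duration..t}"
    by (intro fundamental_theorem_of_calculus_interior[OF assms(1) cont])
  then have arc: "integral {line_duration..t} opt_velocity = p t - p line_duration"
    by (rule integral_unique)
  have split: "integral {0..line_duration} opt_velocity + integral {line_duration..t} opt_velocity
      = integral {0..t} opt_velocity"
    by (rule Henstock_Kurzweil_Integration.integral_combine)
       (use assms line_duration_pos opt_velocity_integrable in auto)
  have "opt_path t = opt_path line_duration + (p t - p line_duration)"
    unfolding opt_path_def split[symmetric] arc by (simp add: add.assoc)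
  then show ?thesis unfolding opt_path_tangent_point p_def by (simp add: arc_angle_0)
qed

lemma opt_path_admissible:
  "admissible \<mu> (x0, y0) opt_heading (line_duration + arc_duration) opt_path"
  unfolding admissible_def
proof (intro conjI ballI)
  show "0 \<le> line_duration + arc_duration" using line_duration_pos arc_duration_nonneg by simp
  show "opt_heading \<in> borel_measurable lborel" by (rule opt_heading_measurable)
  fix t assume t: "t \<in> {0..line_duration + arc_duration}"
  show "opt_path t = (x0, y0) + integral {0..t} (\<lambda>s. rel_vel \<mu> (opt_heading s))"
    unfolding opt_path_def opt_velocity_def ..
  show "1 \<le> norm (opt_path t)"
  proof (cases "t \<le> line_duration")
    case True
    then show ?thesis using t opt_path_on_segment tangent_segment_outside_disk by simp
  next
    case False
    then show ?thesis using t opt_path_arc[of t] by (simp add: norm_prod_def)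
  qed
qed

lemma opt_path_arrives: "opt_path (line_duration + arc_duration) = (cos \<theta>, sin \<theta>)"
  using opt_path_arc[of "line_duration + arc_duration"] arc_duration_nonneg
  by (simp add: arc_angle_duration)

lemma opt_duration: "line_duration + arc_duration = tangent_arc_time \<mu>"
  unfolding tangent_arc_time_def line_duration_def arc_duration_def
  by (simp add: arc_time_on_arc)

lemma tangent_then_arc_path_exists:
  "\<exists>\<psi> T x T1.
     admissible \<mu> (x0, y0) \<psi> T x \<and> x T = (cos \<theta>, sin \<theta>) \<and> T1 \<in> {0..T} \<and>
     x T1 = (cos \<theta>t, sin \<theta>t) \<and>
     (\<forall>t\<in>{0..T1}. x t \<in> closed_segment (x0, y0) (cos \<theta>t, sin \<theta>t)) \<and>
     (\<exists>\<phi>. mono_on {T1..T} \<phi> \<and> \<phi> T1 = \<theta>t \<and> \<phi> T = \<theta> \<and>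
        (\<forall>t\<in>{T1..T}. x t = (cos (\<phi> t), sin (\<phi> t)))) \<and>
     T = tangent_arc_time \<mu>"
proof (intro exI conjI)
  let ?\<phi> = "\<lambda>t. arc_angle (t - line_duration)"
  show "mono_on {line_duration..line_duration + arc_duration} ?\<phi>"
    by (intro mono_onI arc_angle_mono) auto
  show "\<forall>t\<in>{line_duration..line_duration + arc_duration}. opt_path t = (cos (?\<phi> t), sin (?\<phi> t))"
    using opt_path_arc by simp
  show "\<forall>t\<in>{0..line_duration}. opt_path t \<in> closed_segment (x0, y0) (cos \<theta>t, sin \<theta>t)"
    using opt_path_on_segment by simp
  show "line_duration \<in> {0..line_duration + arc_duration}"
    using line_duration_pos arc_duration_nonneg by simp
  show "?\<phi> line_duration = \<theta>t" "?\<phi> (line_duration + arc_duration) = \<theta>"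
    by (simp_all add: arc_angle_0 arc_angle_duration)
qed (fact opt_path_admissible opt_path_arrives opt_path_tangent_point opt_duration)+

end

section \<open>Admissible arrivals\<close>

locale arrival = tangent_geometry +
  fixes \<theta> :: real and \<psi> :: "real \<Rightarrow> real" and T :: real and x :: "real \<Rightarrow> real \<times> real"
  assumes target_after_tangent: "\<theta>t \<le> \<theta>" and target_le_pi: "\<theta> \<le> pi"
    and adm: "admissible \<mu> (x0, y0) \<psi> T x" and arrives: "x T = (cos \<theta>, sin \<theta>)"
begin

lemma duration_nonneg: "0 \<le> T"
  using adm unfolding admissible_def by auto

lemma state_eq: "t \<in> {0..T} \<Longrightarrow> x t = (x0, y0) + integral {0..t} (\<lambda>s. rel_vel \<mu> (\<psi> s))"
  using adm unfolding admissible_def by auto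

lemma state_0: "x 0 = (x0, y0)"
  using state_eq[of 0] duration_nonneg by simp

lemma outside_disk:
  assumes "t \<in> {0..T}" shows "1 \<le> (fst (x t))\<^sup>2 + (snd (x t))\<^sup>2"
proof -
  have "1 \<le> norm (x t)" using adm assms unfolding admissible_def by blast
  then have "1 \<le> sqrt ((fst (x t))\<^sup>2 + (snd (x t))\<^sup>2)" by (simp add: norm_prod_def)
  then show ?thesis by simp
qed

lemma velocity_integrable: "(\<lambda>s. rel_vel \<mu> (\<psi> s)) integrable_on {a..b}"
proof -
  have "\<psi> \<in> borel_measurable lborel" using adm unfolding admissible_def by auto
  then have "(\<lambda>s. rel_vel \<mu> (\<psi> s)) \<in> borel_measurable lborel"
    unfolding rel_vel_def by measurable
  then have "(\<lambda>s. rel_vel \<mu> (\<psi> s)) \<in> borel_measurable (lebesgue_on {a..b})"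
    by (intro measurable_restrict_space1 measurable_completion)
  moreover have "(\<lambda>s. 1 + 2 * \<mu>) integrable_on {a..b}" by (metis integrable_const interval_cbox)
  moreover have "norm (rel_vel \<mu> (\<psi> s)) \<le> 1 + 2 * \<mu>" for s
  proof -
    have "norm (rel_vel \<mu> (\<psi> s)) \<le> norm (\<mu> * cos (\<psi> s) - 1) + norm (\<mu> * sin (\<psi> s))"
      unfolding rel_vel_def by (rule norm_Pair_le)
    also have "norm (\<mu> * cos (\<psi> s) - 1) \<le> \<bar>\<mu> * cos (\<psi> s)\<bar> + 1" by simp
    also have "\<bar>\<mu> * cos (\<psi> s)\<bar> \<le> \<mu>" using mu by (simp add: abs_mult)
    also have "norm (\<mu> * sin (\<psi> s)) \<le> \<mu>" using mu by (simp add: abs_mult)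
    finally show ?thesis by simp
  qed
  ultimately have "(\<lambda>s. rel_vel \<mu> (\<psi> s)) absolutely_integrable_on {a..b}"
    by (intro measurable_bounded_by_integrable_imp_absolutely_integrable) auto
  then show ?thesis by (simp add: absolutely_integrable_on_def)
qed

lemma displacement_bound:
  assumes ab: "0 \<le> a" "a \<le> b" "b \<le> T"
  shows "norm (x b - x a + (b - a, 0)) \<le> \<mu> * (b - a)"
proof -
  let ?v = "\<lambda>s. rel_vel \<mu> (\<psi> s)"
  have one: "(\<lambda>s. (1::real, 0::real)) integrable_on {a..b}" by (metis integrable_const interval_cbox)
  have "x b - x a = integral {0..b} ?v - integral {0..a} ?v"
    using state_eq[of a] state_eq[of b] ab by simp
  also have "integral {0..b} ?v = integral {0..a} ?v + integral {a..b} ?v"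
    using Henstock_Kurzweil_Integration.integral_combine[of 0 a b ?v] ab velocity_integrable
    by simp
  finally have "x b - x a + (b - a, 0) = integral {a..b} ?v + (b - a) *\<^sub>R (1, 0)" by simp
  also have "\<dots> = integral {a..b} (\<lambda>s. ?v s + (1, 0))"
    using integral_add[OF velocity_integrable one] ab by simp
  finally have eq: "x b - x a + (b - a, 0) = integral {a..b} (\<lambda>s. ?v s + (1, 0))" .
  have bound: "norm (?v s + (1, 0)) \<le> \<mu>" for s
  proof -
    have "(\<mu> * cos (\<psi> s))\<^sup>2 + (\<mu> * sin (\<psi> s))\<^sup>2 = \<mu>\<^sup>2 * ((cos (\<psi> s))\<^sup>2 + (sin (\<psi> s))\<^sup>2)"
      by (simp only: power_mult_distrib distrib_left)
    then have "(\<mu> * cos (\<psi> s))\<^sup>2 + (\<mu> * sin (\<psi> s))\<^sup>2 = \<mu>\<^sup>2" by simp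
    then show ?thesis using mu unfolding rel_vel_def by (simp add: norm_prod_def)
  qed
  have "((\<lambda>s. ?v s + (1, 0)) has_integral integral {a..b} (\<lambda>s. ?v s + (1, 0))) (cbox a b)"
    using integrable_integral[OF integrable_add[OF velocity_integrable one]] by simp
  from has_integral_bound[OF less_imp_le[OF mu(1)] this bound] show ?thesis
    unfolding eq using ab by simp
qed

lemma displacement_bound_sq:
  assumes "0 \<le> a" "a \<le> b" "b \<le> T"
  shows "(fst (x b) - fst (x a) + (b - a))\<^sup>2 + (snd (x b) - snd (x a))\<^sup>2 \<le> (\<mu> * (b - a))\<^sup>2"
proof -
  have "sqrt ((fst (x b) - fst (x a) + (b - a))\<^sup>2 + (snd (x b) - snd (x a))\<^sup>2) \<le> \<mu> * (b - a)"
    using displacement_bound[OF assms] by (simp add: norm_prod_def)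
  then show ?thesis by (rule sqrt_le_D)
qed

lemma norm_displacement_le:
  assumes "0 \<le> a" "a \<le> b" "b \<le> T"
  shows "norm (x b - x a) \<le> 2 * (b - a)"
proof -
  have "norm (x b - x a) \<le> norm (x b - x a + (b - a, 0)) + norm ((b - a, 0) :: real \<times> real)"
    using norm_triangle_ineq4[of "x b - x a + (b - a, 0)" "(b - a, 0)"] by simp
  also have "\<dots> \<le> \<mu> * (b - a) + (b - a)"
    using displacement_bound[OF assms] assms by (simp add: norm_prod_def)
  also have "\<dots> \<le> 2 * (b - a)" using mu assms mult_right_mono[of \<mu> 1 "b - a"] by simp
  finally show ?thesis .
qed

lemma continuous_on_state: "continuous_on {0..T} x"
proof -
  have "2-lipschitz_on {0..T} x"
  proof (rule lipschitz_onI)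
    fix s t assume "s \<in> {0..T}" "t \<in> {0..T}"
    then show "dist (x s) (x t) \<le> 2 * dist s t"
      using norm_displacement_le[of s t] norm_displacement_le[of t s]
      by (cases "s \<le> t") (auto simp: dist_norm norm_minus_commute)
  qed simp
  then show ?thesis by (rule lipschitz_on_continuous_on)
qed

lemma duration_pos: "T > 0"
proof (rule ccontr)
  assume "\<not> T > 0"
  then have "(x0, y0) = (cos \<theta>, sin \<theta>)" using duration_nonneg arrives state_0 by simp
  then have "norm (x0, y0) = 1" by (simp add: norm_prod_def)
  then show False using start_norm rho by simp
qed

text \<open>If \<open>cos \<theta> < -\<mu>\<close>, every admissible velocity points strictly outward at
  \<open>(cos \<theta>, sin \<theta>)\<close>, so just before \<open>T\<close> the trajectory would be inside the disk.\<close>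
lemma cos_target_ge: "-\<mu> \<le> cos \<theta>"
proof (rule ccontr)
  assume "\<not> -\<mu> \<le> cos \<theta>"
  define \<delta> where "\<delta> = -(cos \<theta> + \<mu>)"
  have \<delta>: "\<delta> > 0" using \<open>\<not> -\<mu> \<le> cos \<theta>\<close> unfolding \<delta>_def by simp
  define L where "L = min T (\<delta> / 4)"
  have L: "0 < L" "L \<le> T" "L \<le> \<delta> / 4" using duration_pos \<delta> unfolding L_def by auto
  define d1 where "d1 = cos \<theta> - fst (x (T - L))"
  define d2 where "d2 = sin \<theta> - snd (x (T - L))"
  have ch: "(d1 + L)\<^sup>2 + d2\<^sup>2 \<le> (\<mu> * L)\<^sup>2"
    using displacement_bound_sq[of "T - L" T] L arrives unfolding d1_def d2_def by simp
  have "sqrt (d1\<^sup>2 + d2\<^sup>2) \<le> 2 * L"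
    using norm_displacement_le[of "T - L" T] L arrives unfolding d1_def d2_def
    by (simp add: norm_prod_def power2_commute)
  then have small: "d1\<^sup>2 + d2\<^sup>2 \<le> 4 * L\<^sup>2" by (auto dest: sqrt_le_D simp: power_mult_distrib)
  have "\<bar>cos \<theta> * (d1 + L) + sin \<theta> * d2\<bar> \<le> 1 * (\<mu> * L)"
    using abs_lincomb_le_mult[OF ch, of "cos \<theta>" "sin \<theta>" 1] mu L by simp
  then have inward: "\<delta> * L \<le> cos \<theta> * d1 + sin \<theta> * d2" unfolding \<delta>_def by (simp add: algebra_simps)
  have "1 \<le> (cos \<theta> - d1)\<^sup>2 + (sin \<theta> - d2)\<^sup>2"
    using outside_disk[of "T - L"] L unfolding d1_def d2_def by simp
  also have "\<dots> = 1 - 2 * (cos \<theta> * d1 + sin \<theta> * d2) + (d1\<^sup>2 + d2\<^sup>2)"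
    using sin_cos_squared_add[of \<theta>] by (simp add: power2_eq_square algebra_simps)
  finally have "2 * (\<delta> * L) \<le> 4 * L\<^sup>2" using inward small by (smt (verit))
  then have "2 * \<delta> \<le> 4 * L" using L(1) by (simp add: power2_eq_square)
  then show False using L(3) \<delta> by simp
qed

lemma target_lt_pi: "\<theta> < pi"
  using cos_target_ge mu target_le_pi by (cases "\<theta> = pi") auto

lemma target_sin_pos: "sin \<theta> > 0"
  using tangent_angle_pos target_after_tangent target_lt_pi by (intro sin_gt_zero) auto

lemma tangent_sin_pos: "sin \<theta>t > 0"
  using tangent_angle_pos target_after_tangent target_lt_pi by (intro sin_gt_zero) auto

lemma cos_target_le_tangent: "cos \<theta> \<le> cos \<theta>t"
  using tangent_angle_pos target_after_tangent target_le_pi by (intro cos_monotone_0_pi_le) auto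

lemma fst_state_decrease:
  assumes "0 \<le> a" "a \<le> b" "b \<le> T"
  shows "fst (x b) \<le> fst (x a) - (1 - \<mu>) * (b - a)"
proof -
  have "(fst (x b) - fst (x a) + (b - a))\<^sup>2 \<le> (\<mu> * (b - a))\<^sup>2"
    using displacement_bound_sq[OF assms] zero_le_power2[of "snd (x b) - snd (x a)"] by linarith
  then have "\<bar>fst (x b) - fst (x a) + (b - a)\<bar> \<le> \<bar>\<mu> * (b - a)\<bar>"
    by (simp only: abs_le_square_iff)
  then have "fst (x b) - fst (x a) + (b - a) \<le> \<mu> * (b - a)" using mu assms by (simp add: abs_mult)
  then show ?thesis by (simp add: algebra_simps)
qed

lemma fst_state_antimono:
  assumes "0 \<le> a" "a \<le> b" "b \<le> T" shows "fst (x b) \<le> fst (x a)"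
  using fst_state_decrease[OF assms] mu assms mult_nonneg_nonneg[of "1 - \<mu>" "b - a"] by linarith

lemma crossing_exists: "\<exists>tc. 0 < tc \<and> tc \<le> T \<and> fst (x tc) = cos \<theta>t"
proof -
  have end_left: "fst (x T) \<le> cos \<theta>t" using arrives cos_target_le_tangent by simp
  have start_right: "cos \<theta>t < fst (x 0)" using state_0 x0 rho tangent_sin_pos by simp
  have "continuous_on {0..T} (\<lambda>t. fst (x t))"
    using continuous_on_state by (intro continuous_intros)
  then obtain tc where tc: "0 \<le> tc" "tc \<le> T" "fst (x tc) = cos \<theta>t"
    using IVT2'[of "\<lambda>t. fst (x t)", OF end_left less_imp_le[OF start_right] duration_nonneg]
    by blast
  moreover have "tc \<noteq> 0" using tc(3) start_right by (metis less_irrefl)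
  ultimately show ?thesis by (intro exI[of _ tc]) simp
qed

lemma after_crossing:
  assumes tc: "0 \<le> tc" "fst (x tc) = cos \<theta>t" and t: "tc \<le> t" "t \<le> T"
  shows "cos \<theta> \<le> fst (x t)" "fst (x t) \<le> cos \<theta>t" "sqrt (1 - (fst (x t))\<^sup>2) \<le> snd (x t)"
proof -
  have strip: "cos \<theta> \<le> fst (x s) \<and> fst (x s) \<le> cos \<theta>t" if "tc \<le> s" "s \<le> T" for s
    using fst_state_antimono[of tc s] fst_state_antimono[of s T] tc that arrives by auto
  then show "cos \<theta> \<le> fst (x t)" "fst (x t) \<le> cos \<theta>t" using t by auto
  have inside: "(fst (x s))\<^sup>2 < 1" if "tc \<le> s" "s \<le> T" for s
  proof -
    have "cos \<theta>t < 1"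
      using cos_monotone_0_pi[of 0 \<theta>t] tangent_angle_pos target_after_tangent target_lt_pi by simp
    then have "\<bar>fst (x s)\<bar> < 1" using strip[OF that] cos_target_ge mu by auto
    then show ?thesis by (simp add: abs_square_less_1)
  qed
  have pos: "snd (x t) > 0"
  proof (rule ccontr)
    assume "\<not> snd (x t) > 0"
    then have start_below: "snd (x t) \<le> 0" by simp
    have end_above: "0 \<le> snd (x T)" using arrives target_sin_pos by simp
    have "continuous_on {t..T} (\<lambda>t. snd (x t))"
      using continuous_on_subset[OF continuous_on_state] tc t by (intro continuous_intros) auto
    then obtain s where s: "t \<le> s" "s \<le> T" "snd (x s) = 0"
      using IVT'[of "\<lambda>t. snd (x t)", OF start_below end_above t(2)] by blast
    then show False using outside_disk[of s] inside[of s] tc t by simp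
  qed
  have "1 - (fst (x t))\<^sup>2 \<le> (snd (x t))\<^sup>2" using outside_disk[of t] tc t by simp
  then have "sqrt (1 - (fst (x t))\<^sup>2) \<le> sqrt ((snd (x t))\<^sup>2)" by (rule real_sqrt_le_mono)
  then show "sqrt (1 - (fst (x t))\<^sup>2) \<le> snd (x t)" using pos by simp
qed

text \<open>Along the normal \<open>(cos \<theta>t, sin \<theta>t)\<close> of the tangent line the trajectory gains at most
  \<open>\<mu> - cos \<theta>t\<close> per unit time, but it must gain a nonnegative amount to reach the vertical
  through the tangent point outside the disk.\<close>
lemma cos_tangent_le: "cos \<theta>t \<le> \<mu>"
proof -
  obtain tc where tc: "0 < tc" "tc \<le> T" "fst (x tc) = cos \<theta>t" using crossing_exists by blast
  have "sqrt (1 - (cos \<theta>t)\<^sup>2) = sin \<theta>t"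
    using tangent_sin_pos by (simp add: sin_squared_eq[symmetric])
  then have above: "sin \<theta>t \<le> snd (x tc)" using after_crossing(3)[of tc tc] tc by simp
  define d1 where "d1 = fst (x tc) - fst (x 0)"
  define d2 where "d2 = snd (x tc) - snd (x 0)"
  have ch: "(d1 + tc)\<^sup>2 + d2\<^sup>2 \<le> (\<mu> * tc)\<^sup>2"
    using displacement_bound_sq[of 0 tc] tc unfolding d1_def d2_def by simp
  have cs: "\<bar>cos \<theta>t * (d1 + tc) + sin \<theta>t * d2\<bar> \<le> 1 * (\<mu> * tc)"
    using abs_lincomb_le_mult[OF ch, of "cos \<theta>t" "sin \<theta>t" 1] mu tc by simp
  have "cos \<theta>t * d1 + sin \<theta>t * d2 = sin \<theta>t * (snd (x tc) - sin \<theta>t)"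
    unfolding d1_def d2_def state_0 tc(3) x0 y0 by (simp add: algebra_simps)
  also have "\<dots> \<ge> 0" using above tangent_sin_pos by simp
  finally have "cos \<theta>t * tc \<le> \<mu> * tc" using cs by (simp add: algebra_simps)
  then show ?thesis using tc(1) by simp
qed

end

sublocale arrival \<subseteq> tangent_config \<mu> x0 y0 \<theta>t \<rho> \<theta>
  by unfold_locales (rule target_after_tangent target_lt_pi cos_target_ge cos_tangent_le)+

section \<open>A value function\<close>

lemma tangent_gradient_norm:
  fixes X h S m :: real
  assumes h: "h > 0" "h\<^sup>2 = 1 - X\<^sup>2" and S: "S > 0" "S\<^sup>2 = m\<^sup>2 - X\<^sup>2"
  defines "a \<equiv> (X\<^sup>2 - S * h) / ((h + S) * S)"
  shows "a\<^sup>2 + (X / S)\<^sup>2 = (m / ((h + S) * S))\<^sup>2"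
    and "- a + m * (m / ((h + S) * S)) = 1"
proof -
  have nz: "S \<noteq> 0" "h + S \<noteq> 0" using h S by auto
  have "(X\<^sup>2 - S * h)\<^sup>2 + (X * (h + S))\<^sup>2 = (X\<^sup>2 + S\<^sup>2) * (X\<^sup>2 + h\<^sup>2)"
    by (simp add: power2_eq_square algebra_simps)
  also have "\<dots> = m\<^sup>2" using h S by simp
  finally have num: "(X\<^sup>2 - S * h)\<^sup>2 + (X * (h + S))\<^sup>2 = m\<^sup>2" .
  have k: "X / S = (X * (h + S)) / ((h + S) * S)" using nz by simp
  show "a\<^sup>2 + (X / S)\<^sup>2 = (m / ((h + S) * S))\<^sup>2"
    unfolding a_def k power_divide add_divide_distrib[symmetric] num ..
  have "- a + m * (m / ((h + S) * S)) = (m\<^sup>2 - (X\<^sup>2 - S * h)) / ((h + S) * S)"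
    unfolding a_def by (simp add: diff_divide_distrib power2_eq_square)
  also have "m\<^sup>2 - (X\<^sup>2 - S * h) = (h + S) * S" using S by (simp add: power2_eq_square algebra_simps)
  finally show "- a + m * (m / ((h + S) * S)) = 1" using nz by simp
qed

lemma tangent_gradient_values:
  fixes X h S :: real
  assumes h: "h > 0" "h\<^sup>2 = 1 - X\<^sup>2" and S: "S > 0"
  defines "a \<equiv> (X\<^sup>2 - S * h) / ((h + S) * S)"
  shows "a * h - (X / S) * X = - 1 / (h + S)"
    and "- (1 / ((h + S) * h)) - (- X / h) * (X / S) = a"
proof -
  have nz: "h \<noteq> 0" "S \<noteq> 0" "h + S \<noteq> 0" using h S by auto
  have "a * h - (X / S) * X = ((X\<^sup>2 - S * h) * h) / ((h + S) * S) - (X\<^sup>2 * (h + S)) / ((h + S) * S)"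
    unfolding a_def using nz by (simp add: power2_eq_square)
  also have "\<dots> = ((X\<^sup>2 - S * h) * h - X\<^sup>2 * (h + S)) / ((h + S) * S)"
    by (simp add: diff_divide_distrib)
  also have "(X\<^sup>2 - S * h) * h - X\<^sup>2 * (h + S) = - S * (h\<^sup>2 + X\<^sup>2)"
    by (simp add: power2_eq_square algebra_simps)
  also have "\<dots> = - S" by (simp only: h(2) diff_add_cancel mult_1_right)
  finally show "a * h - (X / S) * X = - 1 / (h + S)" using nz by simp
  have "- S + X\<^sup>2 * (h + S) = (X\<^sup>2 - S * h) * h - S * (1 - X\<^sup>2 - h\<^sup>2)"
    by (simp add: power2_eq_square algebra_simps)
  also have "\<dots> = (X\<^sup>2 - S * h) * h" using h by simp
  finally have num: "- S + X\<^sup>2 * (h + S) = (X\<^sup>2 - S * h) * h" .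
  have "1 / ((h + S) * h) = S / ((h + S) * h * S)" "X\<^sup>2 / (h * S) = (X\<^sup>2 * (h + S)) / ((h + S) * h * S)"
    using nz by simp_all
  then have "- (1 / ((h + S) * h)) + X\<^sup>2 / (h * S) = (- S + X\<^sup>2 * (h + S)) / ((h + S) * h * S)"
    by (simp only: add_divide_distrib minus_divide_left)
  also have "\<dots> = a" unfolding num a_def using nz by simp
  finally have sum: "- (1 / ((h + S) * h)) + X\<^sup>2 / (h * S) = a" .
  have prod: "(- X / h) * (X / S) = - (X\<^sup>2 / (h * S))" by (simp add: power2_eq_square)
  show "- (1 / ((h + S) * h)) - (- X / h) * (X / S) = a"
    by (simp only: prod diff_minus_eq_add sum)
qed

text \<open>Working with \<open>m > \<mu>\<close> keeps \<open>m\<^sup>2 - cos\<^sup>2\<close> away from \<open>0\<close> on the arc, so that the value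
  function below is differentiable; the bound for \<open>\<mu>\<close> itself follows by letting \<open>m\<close> tend to \<open>\<mu>\<close>.\<close>
locale arrival_perturbed = arrival +
  fixes m :: real
  assumes m: "\<mu> < m" "m < 1"
begin

definition upper_circle where "upper_circle X = sqrt (1 - X\<^sup>2)"

definition slack where "slack X = sqrt (m\<^sup>2 - X\<^sup>2)"

definition grad_x where
  "grad_x X = (X\<^sup>2 - slack X * upper_circle X) / ((upper_circle X + slack X) * slack X)"

definition grad_y where "grad_y X = X / slack X"

text \<open>A smooth extension of the arc time off the circle, affine in the height. On the circle its
  gradient is \<open>(grad_x, grad_y)\<close>, and along admissible motion above the circle it grows at rate
  at most one.\<close>
definition arc_value where
  "arc_value z = arc_time min_speed m \<theta>t (arccos (fst z)) + grad_y (fst z) * (snd z - upper_circle (fst z))"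

text \<open>The linearisation of \<open>arc_value\<close> at the tangent point.\<close>
definition line_value where
  "line_value z = grad_x (cos \<theta>t) * (fst z - cos \<theta>t) + grad_y (cos \<theta>t) * (snd z - sin \<theta>t)"

lemma m_pos: "0 < m" using m mu by simp

lemma abscissa_bounds:
  assumes "cos \<theta> \<le> X" "X \<le> cos \<theta>t"
  shows "X\<^sup>2 < m\<^sup>2" "X\<^sup>2 < 1"
proof -
  have "\<bar>X\<bar> < m" "\<bar>X\<bar> < 1" using assms cos_target_ge cos_tangent_le m mu by auto
  then show "X\<^sup>2 < m\<^sup>2" "X\<^sup>2 < 1"
    using abs_square_less_1 power_strict_mono[of "\<bar>X\<bar>" m 2] by auto
qed

lemma upper_circle_slack:
  assumes "cos \<theta> \<le> X" "X \<le> cos \<theta>t"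
  shows "upper_circle X > 0" "(upper_circle X)\<^sup>2 = 1 - X\<^sup>2" "slack X > 0" "(slack X)\<^sup>2 = m\<^sup>2 - X\<^sup>2"
  using abscissa_bounds[OF assms] unfolding upper_circle_def slack_def by auto

lemma upper_circle_cos: "0 \<le> \<phi> \<Longrightarrow> \<phi> \<le> pi \<Longrightarrow> upper_circle (cos \<phi>) = sin \<phi>"
  unfolding upper_circle_def by (simp add: sin_ge_zero flip: sin_squared_eq)

lemma arccos_on_arc:
  assumes "cos \<theta> \<le> X" "X \<le> cos \<theta>t"
  shows "arccos X \<in> {\<theta>t..\<theta>}" "arc_speed m (arccos X) = upper_circle X + slack X"
proof -
  have "\<bar>X\<bar> < 1" using abscissa_bounds(2)[OF assms] by (simp add: abs_square_less_1)
  then have X: "-1 \<le> X" "X \<le> 1" by auto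
  have "arccos (cos \<theta>t) \<le> arccos X" "arccos X \<le> arccos (cos \<theta>)"
    using assms X by (auto intro!: arccos_le_arccos)
  moreover have "arccos (cos \<theta>t) = \<theta>t" "arccos (cos \<theta>) = \<theta>"
    using tangent_angle_pos target_after_tangent target_lt_pi by (auto intro!: arccos_cos)
  ultimately show "arccos X \<in> {\<theta>t..\<theta>}" by simp
  show "arc_speed m (arccos X) = upper_circle X + slack X"
    using X unfolding arc_speed_def upper_circle_def slack_def by (simp add: sin_arccos)
qed

text \<open>The Hamiltonian inequality: over the admissible velocity disk \<open>(-1, 0) + \<mu>\<close>-ball, the
  derivative along \<open>(grad_x X, grad_y X)\<close> is at most one.\<close>
lemma grad_increment_le:
  assumes X: "cos \<theta> \<le> X" "X \<le> cos \<theta>t"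
    and d: "(d1 + L)\<^sup>2 + d2\<^sup>2 \<le> (\<mu> * L)\<^sup>2" and L: "0 \<le> L"
  shows "grad_x X * d1 + grad_y X * d2 \<le> L"
proof -
  note H = upper_circle_slack[OF X]
  define M where "M = m / ((upper_circle X + slack X) * slack X)"
  have M0: "0 \<le> M" unfolding M_def using H m_pos by simp
  note I = tangent_gradient_norm[OF H, folded grad_x_def grad_y_def M_def]
  have "grad_x X * (d1 + L) + grad_y X * d2 \<le> M * (\<mu> * L)"
    using abs_lincomb_le_mult[OF d I(1)] mu L M0 by simp
  also have "\<dots> \<le> M * (m * L)" using L m M0 by (intro mult_left_mono mult_right_mono) auto
  finally show ?thesis using I(2) by (simp add: algebra_simps)
qed

lemma arc_value_increment_le:
  assumes X: "cos \<theta> \<le> X" "X \<le> cos \<theta>t" and Y: "upper_circle X \<le> Y"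
    and d: "(d1 + L)\<^sup>2 + d2\<^sup>2 \<le> (\<mu> * L)\<^sup>2" and L: "0 \<le> L"
  shows "(grad_x X + m\<^sup>2 / (slack X) ^ 3 * (Y - upper_circle X)) * d1 + grad_y X * d2 \<le> L"
proof -
  have "(d1 + L)\<^sup>2 \<le> (\<mu> * L)\<^sup>2" using d zero_le_power2[of d2] by linarith
  then have "d1 + L \<le> \<mu> * L" using mu L abs_le_square_iff[of "d1 + L" "\<mu> * L"] by (simp add: abs_le_iff)
  then have "d1 \<le> 0" using mu L mult_right_mono[of \<mu> 1 L] by simp
  moreover have "0 \<le> m\<^sup>2 / (slack X) ^ 3 * (Y - upper_circle X)"
    using upper_circle_slack[OF X] Y by simp
  ultimately have "m\<^sup>2 / (slack X) ^ 3 * (Y - upper_circle X) * d1 \<le> 0"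
    by (intro mult_nonneg_nonpos)
  then show ?thesis using grad_increment_le[OF X d L] by (simp add: algebra_simps)
qed

lemma arc_time_arccos_has_derivative:
  assumes X: "cos \<theta> \<le> X" "X \<le> cos \<theta>t"
  shows "((\<lambda>X. arc_time min_speed m \<theta>t (arccos X)) has_real_derivative
            - 1 / ((upper_circle X + slack X) * upper_circle X)) (at X)"
proof -
  note P = arccos_on_arc[OF X]
  have "\<bar>X\<bar> < 1" using abscissa_bounds(2)[OF X] by (simp add: abs_square_less_1)
  then have X1: "-1 < X" "X < 1" by auto
  have "((\<lambda>X. arc_time min_speed m \<theta>t (arccos X)) has_real_derivative
          arc_pace min_speed m (arccos X) * inverse (- sqrt (1 - X\<^sup>2))) (at X)"
    using P(1) by (intro DERIV_chain2[OF arc_time_has_derivative[OF min_speed_pos] DERIV_arccos[OF X1]]) auto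
  moreover have "arc_pace min_speed m (arccos X) = 1 / (upper_circle X + slack X)"
    using arc_pace_on_arc[OF P(1)] m P(2) by simp
  ultimately show ?thesis unfolding upper_circle_def[symmetric] by (simp add: field_simps)
qed

lemma grad_y_has_derivative:
  assumes X: "cos \<theta> \<le> X" "X \<le> cos \<theta>t"
  shows "(grad_y has_real_derivative m\<^sup>2 / (slack X) ^ 3) (at X)"
proof -
  note S = upper_circle_slack(3,4)[OF X]
  have "(slack has_real_derivative - X / slack X) (at X)"
    using has_real_derivative_sqrt_diff_square[OF abscissa_bounds(1)[OF X]]
    unfolding slack_def[abs_def] by simp
  then have "(grad_y has_real_derivative (1 * slack X - X * (- X / slack X)) / (slack X * slack X)) (at X)"
    unfolding grad_y_def[abs_def] using S by (intro DERIV_divide DERIV_ident) auto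
  moreover have "(1 * slack X - X * (- X / slack X)) / (slack X * slack X) = ((slack X)\<^sup>2 + X\<^sup>2) / (slack X) ^ 3"
    using S by (simp add: field_simps power2_eq_square power3_eq_cube)
  ultimately show ?thesis using S by simp
qed

lemma upper_circle_has_derivative:
  assumes X: "cos \<theta> \<le> X" "X \<le> cos \<theta>t"
  shows "(upper_circle has_real_derivative - X / upper_circle X) (at X)"
  using has_real_derivative_sqrt_diff_square[OF abscissa_bounds(2)[OF X]]
  unfolding upper_circle_def[abs_def] by simp

lemma arc_value_base_has_derivative:
  assumes X: "cos \<theta> \<le> X" "X \<le> cos \<theta>t"
  shows "((\<lambda>X. arc_time min_speed m \<theta>t (arccos X) - grad_y X * upper_circle X) has_real_derivative
            grad_x X - m\<^sup>2 / (slack X) ^ 3 * upper_circle X) (at X)"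
proof -
  let ?h = "upper_circle X" and ?S = "slack X" and ?K = "m\<^sup>2 / (slack X) ^ 3"
  have "((\<lambda>X. arc_time min_speed m \<theta>t (arccos X) - grad_y X * upper_circle X) has_real_derivative
      - 1 / ((?h + ?S) * ?h) - (?K * ?h + (- X / ?h) * grad_y X)) (at X)"
    by (intro DERIV_diff DERIV_mult arc_time_arccos_has_derivative grad_y_has_derivative
        upper_circle_has_derivative X)
  moreover have "- 1 / ((?h + ?S) * ?h) - (?K * ?h + (- X / ?h) * grad_y X)
      = (- (1 / ((?h + ?S) * ?h)) - (- X / ?h) * grad_y X) - ?K * ?h"
    by simp
  moreover have "- (1 / ((?h + ?S) * ?h)) - (- X / ?h) * grad_y X = grad_x X"
    by (simp only: grad_y_def grad_x_def tangent_gradient_values(2)[OF upper_circle_slack(1-3)[OF X]])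
  ultimately show ?thesis by (simp only:)
qed

lemma arc_value_has_derivative:
  assumes X: "cos \<theta> \<le> X" "X \<le> cos \<theta>t"
  shows "(arc_value has_derivative
            (\<lambda>d. (grad_x X + m\<^sup>2 / (slack X) ^ 3 * (Y - upper_circle X)) * fst d + grad_y X * snd d))
           (at (X, Y))"
proof -
  define K where "K = m\<^sup>2 / (slack X) ^ 3"
  define g where "g X = arc_time min_speed m \<theta>t (arccos X) - grad_y X * upper_circle X" for X
  have fst: "((\<lambda>z::real \<times> real. fst z) has_derivative fst) (at (X, Y))"
    by (rule has_derivative_fst[OF has_derivative_ident])
  have snd: "((\<lambda>z::real \<times> real. snd z) has_derivative snd) (at (X, Y))"
    by (rule has_derivative_snd[OF has_derivative_ident])
  have "DERIV g (fst (X, Y)) :> grad_x X - K * upper_circle X"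
    using arc_value_base_has_derivative[OF X] unfolding g_def[abs_def] K_def by simp
  note g = DERIV_compose_FDERIV[OF this fst]
  have "DERIV grad_y (fst (X, Y)) :> K" using grad_y_has_derivative[OF X] unfolding K_def by simp
  note k = has_derivative_mult[OF DERIV_compose_FDERIV[OF this fst] snd]
  have "((\<lambda>z. g (fst z) + grad_y (fst z) * snd z) has_derivative
      (\<lambda>d. fst d * (grad_x X - K * upper_circle X) + (grad_y X * snd d + fst d * K * Y))) (at (X, Y))"
    using has_derivative_add[OF g k] by simp
  moreover have "arc_value = (\<lambda>z. g (fst z) + grad_y (fst z) * snd z)"
    by (rule ext) (simp add: arc_value_def g_def algebra_simps)
  moreover have "(\<lambda>d. fst d * (grad_x X - K * upper_circle X) + (grad_y X * snd d + fst d * K * Y))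
      = (\<lambda>d. (grad_x X + K * (Y - upper_circle X)) * fst d + grad_y X * snd d)"
    by (rule ext) (simp add: algebra_simps)
  ultimately show ?thesis unfolding K_def by simp
qed

lemma arc_value_local_growth:
  assumes tc: "0 \<le> tc" "fst (x tc) = cos \<theta>t" and t: "tc \<le> t" "t < T" and e: "0 < e"
  shows "\<exists>d>0. \<forall>s. t < s \<and> s < t + d \<and> s \<le> T \<longrightarrow> arc_value (x s) - arc_value (x t) \<le> (1 + e) * (s - t)"
proof -
  obtain X Y where XY: "x t = (X, Y)" by (cases "x t")
  have X: "cos \<theta> \<le> X" "X \<le> cos \<theta>t" and Y: "upper_circle X \<le> Y"
    using after_crossing[OF tc t(1)] t XY unfolding upper_circle_def by auto
  define D where "D = (\<lambda>d::real \<times> real.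
    (grad_x X + m\<^sup>2 / (slack X) ^ 3 * (Y - upper_circle X)) * fst d + grad_y X * snd d)"
  have der: "(arc_value has_derivative D) (at (x t))"
    unfolding XY D_def by (rule arc_value_has_derivative[OF X])
  have incr: "D (x s - x t) \<le> 1 * (s - t)" if "t < s" "s \<le> T" for s
  proof -
    have "(fst (x s) - X + (s - t))\<^sup>2 + (snd (x s) - Y)\<^sup>2 \<le> (\<mu> * (s - t))\<^sup>2"
      using displacement_bound_sq[of t s] that t tc XY by simp
    from arc_value_increment_le[OF X Y this] that show ?thesis unfolding D_def XY by simp
  qed
  have lip: "norm (x s - x t) \<le> 2 * (s - t)" if "t < s" "s \<le> T" for s
    using norm_displacement_le[of t s] that t tc by simp
  show ?thesis by (rule right_growth_of_derivative[OF der incr lip _ e]) simp_all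
qed

lemma arc_value_growth:
  assumes tc: "0 \<le> tc" "fst (x tc) = cos \<theta>t" "tc \<le> T"
  shows "arc_value (x T) - arc_value (x tc) \<le> T - tc"
proof -
  have "isCont arc_value (x t)" if "t \<in> {tc..T}" for t
  proof -
    have "cos \<theta> \<le> fst (x t)" "fst (x t) \<le> cos \<theta>t" using after_crossing(1,2)[OF tc(1,2)] that by auto
    from has_derivative_continuous[OF arc_value_has_derivative[OF this, of "snd (x t)"]] show ?thesis
      by simp
  qed
  then have "continuous_on (x ` {tc..T}) arc_value"
    by (intro continuous_at_imp_continuous_on) blast
  moreover have "continuous_on {tc..T} x"
    using continuous_on_subset[OF continuous_on_state] tc by auto
  ultimately have "continuous_on {tc..T} (\<lambda>t. arc_value (x t))"
    using continuous_on_compose[of "{tc..T}" x arc_value] by (simp add: o_def)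
  then have "arc_value (x T) - arc_value (x tc) \<le> 1 * (T - tc)"
    using arc_value_local_growth[OF tc(1,2)] by (intro increment_le_of_right_growth[OF tc(3)]) auto
  then show ?thesis by simp
qed

lemma line_value_increment:
  assumes "0 \<le> a" "a \<le> b" "b \<le> T"
  shows "line_value (x b) - line_value (x a) \<le> b - a"
  using grad_increment_le[OF cos_target_le_tangent order_refl displacement_bound_sq[OF assms]] assms
  unfolding line_value_def by (simp add: algebra_simps)

lemma line_value_start: "line_value (x0, y0) = - \<rho> / arc_speed m \<theta>t"
proof -
  have c: "cos \<theta> \<le> cos \<theta>t" "cos \<theta>t \<le> cos \<theta>t" using cos_target_le_tangent by auto
  have h: "upper_circle (cos \<theta>t) = sin \<theta>t"
    using tangent_angle_pos target_after_tangent target_lt_pi by (intro upper_circle_cos) auto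
  have "line_value (x0, y0) = \<rho> * (grad_x (cos \<theta>t) * upper_circle (cos \<theta>t) - grad_y (cos \<theta>t) * cos \<theta>t)"
    unfolding line_value_def x0 y0 h by (simp add: algebra_simps)
  also have "\<dots> = - \<rho> / (upper_circle (cos \<theta>t) + slack (cos \<theta>t))"
    using tangent_gradient_values(1)[OF upper_circle_slack(1-3)[OF c]]
    unfolding grad_x_def grad_y_def by simp
  finally show ?thesis unfolding arc_speed_def h slack_def by simp
qed

lemma line_value_eq_arc_value: "fst z = cos \<theta>t \<Longrightarrow> line_value z = arc_value z"
  using arccos_cos[of \<theta>t] upper_circle_cos[of \<theta>t] tangent_angle_pos target_after_tangent target_lt_pi
  unfolding line_value_def arc_value_def by (simp add: algebra_simps)

lemma arc_value_target: "arc_value (cos \<theta>, sin \<theta>) = integral {\<theta>t..\<theta>} (\<lambda>\<phi>. 1 / arc_speed m \<phi>)"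
  using arccos_cos[of \<theta>] upper_circle_cos[of \<theta>] tangent_angle_pos target_after_tangent target_lt_pi
    arc_time_on_arc[of m] m
  unfolding arc_value_def by simp

lemma tangent_arc_time_perturbed_le: "tangent_arc_time m \<le> T"
proof -
  obtain tc where tc: "0 < tc" "tc \<le> T" "fst (x tc) = cos \<theta>t" using crossing_exists by blast
  have "line_value (x tc) - line_value (x 0) \<le> tc" using line_value_increment[of 0 tc] tc by simp
  moreover have "arc_value (x T) - arc_value (x tc) \<le> T - tc" using arc_value_growth[of tc] tc by simp
  ultimately show ?thesis
    using line_value_start line_value_eq_arc_value[OF tc(3)] arc_value_target arrives state_0
    unfolding tangent_arc_time_def by simp
qed

end

section \<open>Optimality\<close>

context tangent_config
begin

lemma inv_arc_speed_perturbation: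
  assumes \<phi>: "\<phi> \<in> {\<theta>t..\<theta>}" and \<delta>: "0 < \<delta>"
  shows "1 / arc_speed \<mu> \<phi> \<le> 1 / arc_speed (sqrt (\<mu>\<^sup>2 + \<delta>\<^sup>2)) \<phi> + \<delta> / (1 - \<mu>\<^sup>2)"
proof -
  define m where "m = sqrt (\<mu>\<^sup>2 + \<delta>\<^sup>2)"
  have "\<mu> \<le> m" unfolding m_def by (simp add: real_le_rsqrt)
  then have A: "min_speed \<le> arc_speed \<mu> \<phi>" and B: "min_speed \<le> arc_speed m \<phi>"
    using arc_speed_ge(2)[OF \<phi>] by auto
  have "sqrt (m\<^sup>2 - (cos \<phi>)\<^sup>2) = sqrt ((\<mu>\<^sup>2 - (cos \<phi>)\<^sup>2) + \<delta>\<^sup>2)" unfolding m_def by simp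
  also have "\<dots> \<le> sqrt (\<mu>\<^sup>2 - (cos \<phi>)\<^sup>2) + sqrt (\<delta>\<^sup>2)"
    by (rule sqrt_add_le_add_sqrt) (use cos_sq_le_on_arc[OF \<phi>] in auto)
  finally have diff: "arc_speed m \<phi> - arc_speed \<mu> \<phi> \<le> \<delta>" unfolding arc_speed_def using \<delta> by simp
  have pos: "0 < arc_speed \<mu> \<phi>" "0 < arc_speed m \<phi>" using A B min_speed_pos by linarith+
  have "1 / arc_speed \<mu> \<phi> - 1 / arc_speed m \<phi> = (arc_speed m \<phi> - arc_speed \<mu> \<phi>) / (arc_speed \<mu> \<phi> * arc_speed m \<phi>)"
    using pos by (simp add: field_simps)
  also have "\<dots> \<le> \<delta> / min_speed\<^sup>2"
  proof (rule frac_le)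
    show "min_speed\<^sup>2 \<le> arc_speed \<mu> \<phi> * arc_speed m \<phi>"
      unfolding power2_eq_square using A B min_speed_pos by (intro mult_mono) auto
  qed (use diff \<delta> min_speed_pos in auto)
  finally show ?thesis unfolding min_speed_sq m_def by simp
qed

lemma tangent_arc_time_perturbation:
  assumes \<delta>: "0 < \<delta>"
  shows "tangent_arc_time \<mu> \<le> tangent_arc_time (sqrt (\<mu>\<^sup>2 + \<delta>\<^sup>2)) + (\<rho> + (\<theta> - \<theta>t)) / (1 - \<mu>\<^sup>2) * \<delta>"
proof -
  define m where "m = sqrt (\<mu>\<^sup>2 + \<delta>\<^sup>2)"
  define q where "q = \<delta> / (1 - \<mu>\<^sup>2)"
  have m: "\<mu> \<le> m" unfolding m_def by (simp add: real_le_rsqrt)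
  note pt = inv_arc_speed_perturbation[OF _ \<delta>, folded m_def q_def]
  have "integral {\<theta>t..\<theta>} (\<lambda>\<phi>. 1 / arc_speed \<mu> \<phi>) \<le> integral {\<theta>t..\<theta>} (\<lambda>\<phi>. 1 / arc_speed m \<phi> + q)"
    using pt inv_arc_speed_integrable[OF order_refl] inv_arc_speed_integrable[OF m]
    by (intro integral_le integrable_add) auto
  also have "\<dots> = integral {\<theta>t..\<theta>} (\<lambda>\<phi>. 1 / arc_speed m \<phi>) + (\<theta> - \<theta>t) * q"
    using integral_add[OF inv_arc_speed_integrable[OF m] integrable_continuous_interval[OF continuous_on_const]]
      target_angle(1) by simp
  finally have arc: "integral {\<theta>t..\<theta>} (\<lambda>\<phi>. 1 / arc_speed \<mu> \<phi>)
      \<le> integral {\<theta>t..\<theta>} (\<lambda>\<phi>. 1 / arc_speed m \<phi>) + (\<theta> - \<theta>t) * q" .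
  have "\<rho> * (1 / arc_speed \<mu> \<theta>t) \<le> \<rho> * (1 / arc_speed m \<theta>t + q)"
    using pt[of \<theta>t] target_angle(1) rho by (intro mult_left_mono) auto
  then have line: "\<rho> / arc_speed \<mu> \<theta>t \<le> \<rho> / arc_speed m \<theta>t + \<rho> * q"
    by (simp add: distrib_left)
  have "(\<rho> + (\<theta> - \<theta>t)) / (1 - \<mu>\<^sup>2) * \<delta> = \<rho> * q + (\<theta> - \<theta>t) * q"
    unfolding q_def by (simp add: add_divide_distrib diff_divide_distrib algebra_simps)
  with arc line show ?thesis
    unfolding tangent_arc_time_def m_def[symmetric] by linarith
qed

end

context arrival
begin

lemma duration_lower_bound: "tangent_arc_time \<mu> \<le> T"
proof (rule field_le_epsilon)
  fix e :: real assume e: "0 < e"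
  define K where "K = (\<rho> + (\<theta> - \<theta>t)) / (1 - \<mu>\<^sup>2)"
  define \<delta> where "\<delta> = min (e / (K + 1)) (min_speed / 2)"
  have K: "0 \<le> K" unfolding K_def using rho target_after_tangent mu_sq_lt_1 by simp
  have \<delta>: "0 < \<delta>" "K * \<delta> \<le> e" "\<delta> \<le> min_speed / 2"
    using e K min_speed_pos unfolding \<delta>_def by (auto simp: field_simps min_def)
  have "\<delta>\<^sup>2 < min_speed\<^sup>2"
    using \<delta> min_speed_pos by (intro power_strict_mono) auto
  then have m: "\<mu> < sqrt (\<mu>\<^sup>2 + \<delta>\<^sup>2)" "sqrt (\<mu>\<^sup>2 + \<delta>\<^sup>2) < 1"
    using \<delta>(1) mu unfolding min_speed_sq by (auto intro!: real_less_rsqrt simp: real_sqrt_less_iff)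
  interpret perturbed: arrival_perturbed \<mu> x0 y0 \<theta>t \<rho> \<theta> \<psi> T x "sqrt (\<mu>\<^sup>2 + \<delta>\<^sup>2)"
    by unfold_locales (fact m)+
  show "tangent_arc_time \<mu> \<le> T + e"
    using tangent_arc_time_perturbation[OF \<delta>(1)] perturbed.tangent_arc_time_perturbed_le \<delta>(2)
    unfolding K_def by simp
qed

end

lemma tangent_point_decomposition:
  fixes x0 y0 :: real
  assumes r1: "norm (x0, y0) > 1" and y0: "y0 \<ge> 0"
  defines "\<theta>t \<equiv> arccos (1 / norm (x0, y0)) + atan2 y0 x0"
    and "\<rho> \<equiv> sqrt ((norm (x0, y0))\<^sup>2 - 1)"
  shows "x0 = cos \<theta>t + \<rho> * sin \<theta>t" "y0 = sin \<theta>t - \<rho> * cos \<theta>t" "0 < \<theta>t" "0 < \<rho>"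
proof -
  define r where "r = norm (x0, y0)"
  define a where "a = atan2 y0 x0"
  define b where "b = arccos (1 / r)"
  have "rcis (cmod (Complex x0 y0)) (Arg (Complex x0 y0)) = Complex x0 y0" by (rule rcis_cmod_Arg)
  moreover have "cmod (Complex x0 y0) = r" unfolding r_def by (simp add: cmod_def norm_prod_def)
  ultimately have xa: "x0 = r * cos a" and ya: "y0 = r * sin a"
    unfolding a_def atan2_def by (auto simp: rcis_def cis_def complex_eq_iff)
  have r: "1 < r" using r1 unfolding r_def .
  have "0 \<le> a"
  proof (rule ccontr)
    assume "\<not> 0 \<le> a"
    moreover have "-pi < a" unfolding a_def atan2_def using Arg_bounded by auto
    ultimately have "sin a < 0" using sin_gt_zero[of "-a"] by auto
    then show False using ya y0 r mult_pos_neg[of r "sin a"] by simp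
  qed
  have ir: "0 < 1 / r" "1 / r < 1" using r by auto
  have cb: "cos b = 1 / r" unfolding b_def using ir by (intro cos_arccos) linarith+
  have "sin b = sqrt (1 - (1 / r)\<^sup>2)" unfolding b_def using ir by (intro sin_arccos) linarith+
  also have "1 - (1 / r)\<^sup>2 = (r\<^sup>2 - 1) / r\<^sup>2" using r by (simp add: field_simps power2_eq_square)
  also have "sqrt ((r\<^sup>2 - 1) / r\<^sup>2) = \<rho> / r" unfolding \<rho>_def r_def[symmetric] using r by (simp add: real_sqrt_divide)
  finally have sb: "sin b = \<rho> / r" .
  have rc: "r * cos b = 1" and rs: "r * sin b = \<rho>" using cb sb r by simp_all
  have th: "\<theta>t = b + a" unfolding \<theta>t_def a_def b_def r_def by simp
  have "x0 = r * cos (\<theta>t - b)" using xa th by simp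
  also have "\<dots> = cos \<theta>t * (r * cos b) + sin \<theta>t * (r * sin b)" by (simp add: cos_diff algebra_simps)
  finally show "x0 = cos \<theta>t + \<rho> * sin \<theta>t" using rc rs by simp
  have "y0 = r * sin (\<theta>t - b)" using ya th by simp
  also have "\<dots> = sin \<theta>t * (r * cos b) - cos \<theta>t * (r * sin b)" by (simp add: sin_diff algebra_simps)
  finally show "y0 = sin \<theta>t - \<rho> * cos \<theta>t" using rc rs by simp
  show "0 < \<theta>t" using th \<open>0 \<le> a\<close> arccos_lt_bounded[of "1 / r"] ir unfolding b_def by simp
  show "0 < \<rho>" unfolding \<rho>_def using r1 by simp
qed

theorem theorem1:
  fixes \<mu> x0 y0 \<theta> :: real
  assumes "0 < \<mu>" "\<mu> < 1"
    and "norm (x0, y0) > 1" "y0 \<ge> 0"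
    and "\<theta> \<ge> arccos (1 / norm (x0, y0)) + atan2 y0 x0" "\<theta> \<le> pi"
    and "\<exists>\<psi> T x. admissible \<mu> (x0, y0) \<psi> T x \<and> x T = (cos \<theta>, sin \<theta>)"
  shows "\<exists>\<psi> T x T1.
           admissible \<mu> (x0, y0) \<psi> T x \<and> x T = (cos \<theta>, sin \<theta>) \<and>
           T1 \<in> {0..T} \<and>
           (let \<theta>tan = arccos (1 / norm (x0, y0)) + atan2 y0 x0 in
              x T1 = (cos \<theta>tan, sin \<theta>tan) \<and>
              (\<forall>t\<in>{0..T1}. x t \<in> closed_segment (x0, y0) (cos \<theta>tan, sin \<theta>tan)) \<and>
              (\<exists>\<phi>. mono_on {T1..T} \<phi> \<and> \<phi> T1 = \<theta>tan \<and> \<phi> T = \<theta> \<and>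
                    (\<forall>t\<in>{T1..T}. x t = (cos (\<phi> t), sin (\<phi> t))))) \<and>
           (\<forall>\<psi>' T' x'. admissible \<mu> (x0, y0) \<psi>' T' x' \<and> x' T' = (cos \<theta>, sin \<theta>)
               \<longrightarrow> T \<le> T')"
proof -
  define \<theta>t where "\<theta>t = arccos (1 / norm (x0, y0)) + atan2 y0 x0"
  define \<rho> where "\<rho> = sqrt ((norm (x0, y0))\<^sup>2 - 1)"
  have geometry: "tangent_geometry \<mu> x0 y0 \<theta>t \<rho>"
    using tangent_point_decomposition[OF assms(3,4)] assms(1,2)
    unfolding \<theta>t_def \<rho>_def by unfold_locales auto
  have arrival_of: "arrival \<mu> x0 y0 \<theta>t \<rho> \<theta> \<psi> T x"
    if "admissible \<mu> (x0, y0) \<psi> T x" "x T = (cos \<theta>, sin \<theta>)" for \<psi> T x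
    using geometry that assms(5,6) unfolding \<theta>t_def by (intro arrival.intro arrival_axioms.intro) auto
  obtain \<psi>w Tw xw where "admissible \<mu> (x0, y0) \<psi>w Tw xw" "xw Tw = (cos \<theta>, sin \<theta>)"
    using assms(7) by blast
  then interpret arrival \<mu> x0 y0 \<theta>t \<rho> \<theta> \<psi>w Tw xw by (rule arrival_of)
  have "tangent_arc_time \<mu> \<le> T'"
    if "admissible \<mu> (x0, y0) \<psi>' T' x'" "x' T' = (cos \<theta>, sin \<theta>)" for \<psi>' T' x'
    using arrival.duration_lower_bound[OF arrival_of[OF that]] .
  with tangent_then_arc_path_exists show ?thesis
    unfolding Let_def \<theta>t_def[symmetric] by blast
qed

end
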